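(* Let $A\in\mathbb{R}^{m\times n}$, $b\in\mathbb{R}^m$, let $L\in\mathbb{R}^{s\times n}$ have full column rank, and let $W_1,\dots,W_M\in\mathbb{R}^{m\times\ell}$ satisfy $\sum_{i=1}^M W_iW_i^\top = I_m$. Let $\tau(1),\tau(2),\dots$ be independent random variables, each uniformly distributed on $\{1,\dots,M\}$ (sampling with replacement). Write $A_{\tau(k)}=W_{\tau(k)}^\top A$, $b_{\tau(k)}=W_{\tau(k)}^\top b$. (i) Let $\lambda>0$, $y_0\in\mathbb{R}^n$ arbitrary, and define $$y_k = y_{k-1} - B_kA_{\tau(k)}^\top(A_{\tau(k)}y_{k-1}-b_{\tau(k)}),\qquad B_k=\Big(\lambda L^\top L+\sum_{i=1}^kA_{\tau(i)}^\top A_{\tau(i)}\Big)^{-1},\quad k\in\mathbb{N}.$$ If $A$ has full column rank, then $y_k\to x(0)=(A^\top A)^{-1}A^\top b$ almost surely as $k\to\infty$. (ii) Let $\Lambda_1,\Lambda_2,\dots$ be real numbers with $\sum_{i=1}^k\Lambda_i>0$ for all $k$ such that the limit $\lambda=\lim_{k\to\infty}\frac{M}{k}\sum_{i=1}^k\Lambda_i$ exists, is finite and satisfies $\lambda>0$. Let $x_0\in\mathbb{R}^n$ be arbitrary and define $$x_k = x_{k-1}-B_k\big(A_{\tau(k)}^\top(A_{\tau(k)}x_{k-1}-b_{\tau(k)})+\Lambda_kL^\top Lx_{k-1}\big),\qquad B_k=\Big(\sum_{i=1}^k\Lambda_iL^\top L+\sum_{i=1}^kA_{\tau(i)}^\top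 A_{\tau(i)}\Big)^{-1}.$$ Then $x_k\to x(\lambda)=(A^\top A+\lambda L^\top L)^{-1}A^\top b$ almost surely as $k\to\infty$.
   Context: For $\lambda\ge 0$ (with $\lambda=0$ only when $A$ has full column rank), $x(\lambda)=(A^\top A+\lambda L^\top L)^{-1}A^\top b$ denotes the Tikhonov solution of $\min_x\|Ax-b\|_2^2+\lambda\|Lx\|_2^2$. *)

theory Defs
  imports "HOL-Probability.Probability"
begin

definition blkA :: "(nat \<Rightarrow> real^'l^'m) \<Rightarrow> real^'n^'m \<Rightarrow> nat \<Rightarrow> real^'n^'l" where
  "blkA W A i = transpose (W i) ** A"

definition blkb :: "(nat \<Rightarrow> real^'l^'m) \<Rightarrow> real^'m \<Rightarrow> nat \<Rightarrow> real^'l" where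
  "blkb W b i = transpose (W i) *v b"

definition tikhonov :: "real^'n^'m \<Rightarrow> real^'m \<Rightarrow> real^'n^'s \<Rightarrow> real \<Rightarrow> real^'n" where
  "tikhonov A b L lam =
     matrix_inv (transpose A ** A + lam *\<^sub>R (transpose L ** L)) *v (transpose A *v b)"

primrec iter_i :: "real^'n^'m \<Rightarrow> real^'m \<Rightarrow> real^'n^'s \<Rightarrow> (nat \<Rightarrow> real^'l^'m)
      \<Rightarrow> (nat \<Rightarrow> nat) \<Rightarrow> real \<Rightarrow> real^'n \<Rightarrow> nat \<Rightarrow> real^'n" where
  "iter_i A b L W t lam y0 0 = y0"
| "iter_i A b L W t lam y0 (Suc k) =
     (let Bk = matrix_inv (lam *\<^sub>R (transpose L ** L)
                 + (\<Sum>i\<in>{1..Suc k}. transpose (blkA W A (t i)) ** blkA W A (t i)));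
          y = iter_i A b L W t lam y0 k
      in y - Bk *v (transpose (blkA W A (t (Suc k)))
                     *v (blkA W A (t (Suc k)) *v y - blkb W b (t (Suc k)))))"

primrec iter_ii :: "real^'n^'m \<Rightarrow> real^'m \<Rightarrow> real^'n^'s \<Rightarrow> (nat \<Rightarrow> real^'l^'m)
      \<Rightarrow> (nat \<Rightarrow> nat) \<Rightarrow> (nat \<Rightarrow> real) \<Rightarrow> real^'n \<Rightarrow> nat \<Rightarrow> real^'n" where
  "iter_ii A b L W t Lam x0 0 = x0"
| "iter_ii A b L W t Lam x0 (Suc k) =
     (let Bk = matrix_inv ((\<Sum>i\<in>{1..Suc k}. Lam i) *\<^sub>R (transpose L ** L)
                 + (\<Sum>i\<in>{1..Suc k}. transpose (blkA W A (t i)) ** blkA W A (t i)));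
          x = iter_ii A b L W t Lam x0 k
      in x - Bk *v (transpose (blkA W A (t (Suc k)))
                     *v (blkA W A (t (Suc k)) *v x - blkb W b (t (Suc k)))
                   + Lam (Suc k) *\<^sub>R ((transpose L ** L) *v x)))"

end

theory Submission
  imports Defs
begin

text \<open>
  Each iterate solves its regularized normal equation exactly: with
  G_k = lam L^T L + (sum over i <= k of A_tau(i)^T A_tau(i)) one has
  G_k y_k = lam L^T L y_0 + (sum over i <= k of A_tau(i)^T b_tau(i)), and likewise for x_k with
  Lambda_1 + ... + Lambda_k in place of lam and without the y_0 term.
  After scaling by M/k the block sums are weighted by the empirical frequencies of the sampled
  indices, which tend to 1/M almost surely by Hoeffding's inequality and Borel--Cantelli.
  Since sum_i W_i W_i^T = I, the scaled systems therefore converge to the Tikhonov normal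
  equations (A^T A + lam L^T L) x = A^T b (with lam = 0 in part (i)), whose matrix is invertible;
  and solutions of linear systems converging to an invertible one converge to its solution.
\<close>

section \<open>Positive definite Gram matrices\<close>

lemma matrix_inv_right:
  fixes A :: "real^'n^'n"
  assumes "invertible A"
  shows "A ** matrix_inv A = mat 1"
proof -
  have "\<exists>A'. A ** A' = mat 1 \<and> A' ** A = mat 1"
    using assms unfolding invertible_def by blast
  then show ?thesis
    unfolding matrix_inv_def by (rule someI2_ex) blast
qed

lemma invertible_if_pos_def:
  fixes X :: "real^'n^'n"
  assumes "\<And>v. v \<noteq> 0 \<Longrightarrow> v \<bullet> (X *v v) > 0"
  shows "invertible X"
proof -
  have "\<forall>x. X *v x = 0 \<longrightarrow> x = 0"
    using assms by (metis inner_zero_right less_irrefl)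
  then show ?thesis
    by (simp add: invertible_left_inverse matrix_left_invertible_ker)
qed

lemma inner_transpose_mult_self:
  fixes B :: "real^'n^'m"
  shows "v \<bullet> ((transpose B ** B) *v v) = (norm (B *v v))\<^sup>2"
proof -
  have "v \<bullet> ((transpose B ** B) *v v) = ((B *v v) v* B) \<bullet> v"
    by (simp add: matrix_vector_mul_assoc[symmetric] inner_commute)
  also have "\<dots> = (B *v v) \<bullet> (B *v v)" by (rule dot_lmul_matrix)
  finally show ?thesis by (simp add: power2_norm_eq_inner)
qed

lemma matrix_vector_mult_nonzero_if_full_rank:
  fixes A :: "real^'n^'m"
  assumes "rank A = CARD('n)" and "v \<noteq> 0"
  shows "A *v v \<noteq> 0"
  using assms by (metis full_rank_injective injD matrix_vector_mult_0_right)

lemma inner_sum_matrix_vector: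
  "v \<bullet> ((\<Sum>j\<in>S. (F j :: real^'n^'n)) *v v) = (\<Sum>j\<in>S. v \<bullet> (F j *v v))"
  by (induct S rule: infinite_finite_induct)
     (simp_all add: matrix_vector_mult_add_rdistrib inner_add_right)

lemma invertible_regularized_gram_sum:
  fixes L :: "real^'n^'s" and B :: "nat \<Rightarrow> real^'n^'l"
  assumes "a > 0" and "rank L = CARD('n)"
  shows "invertible (a *\<^sub>R (transpose L ** L) + (\<Sum>j\<in>S. transpose (B j) ** B j))"
proof (rule invertible_if_pos_def)
  fix v :: "real^'n"
  assume "v \<noteq> 0"
  then have "L *v v \<noteq> 0"
    using assms(2) by (intro matrix_vector_mult_nonzero_if_full_rank)
  then have "0 < a * (norm (L *v v))\<^sup>2" using assms(1) by simp
  also have "\<dots> \<le> a * (norm (L *v v))\<^sup>2 + (\<Sum>j\<in>S. (norm (B j *v v))\<^sup>2)"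
    by (simp add: sum_nonneg)
  also have "\<dots> = v \<bullet> ((a *\<^sub>R (transpose L ** L) + (\<Sum>j\<in>S. transpose (B j) ** B j)) *v v)"
    by (simp add: matrix_vector_mult_add_rdistrib inner_add_right inner_sum_matrix_vector
        inner_transpose_mult_self scaleR_matrix_vector_assoc[symmetric])
  finally show "0 < v \<bullet> ((a *\<^sub>R (transpose L ** L) + (\<Sum>j\<in>S. transpose (B j) ** B j)) *v v)" .
qed

lemma invertible_tikhonov_matrix:
  fixes A :: "real^'n^'m" and L :: "real^'n^'s"
  assumes "lam \<ge> 0" and "rank A = CARD('n) \<or> lam > 0 \<and> rank L = CARD('n)"
  shows "invertible (transpose A ** A + lam *\<^sub>R (transpose L ** L))"
proof (rule invertible_if_pos_def)
  fix v :: "real^'n"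
  assume "v \<noteq> 0"
  have "v \<bullet> ((transpose A ** A + lam *\<^sub>R (transpose L ** L)) *v v)
      = (norm (A *v v))\<^sup>2 + lam * (norm (L *v v))\<^sup>2"
    by (simp add: matrix_vector_mult_add_rdistrib inner_add_right inner_transpose_mult_self
        scaleR_matrix_vector_assoc[symmetric])
  moreover have "A *v v \<noteq> 0 \<or> lam > 0 \<and> L *v v \<noteq> 0"
    using assms(2) by (metis \<open>v \<noteq> 0\<close> matrix_vector_mult_nonzero_if_full_rank)
  ultimately show "0 < v \<bullet> ((transpose A ** A + lam *\<^sub>R (transpose L ** L)) *v v)"
    using assms(1) by (auto intro: add_pos_nonneg add_nonneg_pos)
qed

section \<open>The iterates solve regularized normal equations\<close>

lemma recursive_update_eq:
  fixes H Q :: "real^'n^'n"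
  assumes "invertible (H + Q)"
  shows "(H + Q) *v (x - matrix_inv (H + Q) *v (Q *v x - c)) = H *v x + c"
proof -
  have "(H + Q) *v (matrix_inv (H + Q) *v (Q *v x - c)) = Q *v x - c"
    by (simp add: matrix_vector_mul_assoc matrix_inv_right[OF assms])
  then show ?thesis
    by (simp add: matrix_vector_mult_diff_distrib matrix_vector_mult_add_rdistrib)
qed

lemma transpose_residual_eq:
  fixes B :: "real^'n^'l"
  shows "transpose B *v (B *v x - c) = (transpose B ** B) *v x - transpose B *v c"
  by (simp add: matrix_vector_mult_diff_distrib matrix_vector_mul_assoc)

lemma iter_i_normal_equations:
  fixes A :: "real^'n^'m" and L :: "real^'n^'s" and W :: "nat \<Rightarrow> real^'l^'m"
    and t :: "nat \<Rightarrow> nat" and lam :: real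
  defines "G k \<equiv> lam *\<^sub>R (transpose L ** L) + (\<Sum>i\<in>{1..k}. transpose (blkA W A (t i)) ** blkA W A (t i))"
  assumes "\<And>k. invertible (G (Suc k))"
  shows "G k *v iter_i A b L W t lam y0 k
         = (lam *\<^sub>R (transpose L ** L)) *v y0 + (\<Sum>i\<in>{1..k}. transpose (blkA W A (t i)) *v blkb W b (t i))"
proof (induction k)
  case (Suc k)
  let ?B = "blkA W A (t (Suc k))" and ?c = "blkb W b (t (Suc k))"
    and ?y = "iter_i A b L W t lam y0 k"
  have G: "G (Suc k) = G k + transpose ?B ** ?B"
    by (simp add: G_def add.assoc)
  have "iter_i A b L W t lam y0 (Suc k) = ?y - matrix_inv (G (Suc k)) *v (transpose ?B *v (?B *v ?y - ?c))"
    by (simp only: iter_i.simps Let_def G_def)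
  then have "G (Suc k) *v iter_i A b L W t lam y0 (Suc k) = G k *v ?y + transpose ?B *v ?c"
    using recursive_update_eq[OF assms(2)[of k, unfolded G]] by (simp only: transpose_residual_eq G)
  then show ?case
    using Suc.IH by (simp add: add.assoc)
qed (simp add: G_def)

lemma iter_ii_normal_equations:
  fixes A :: "real^'n^'m" and L :: "real^'n^'s" and W :: "nat \<Rightarrow> real^'l^'m"
    and t :: "nat \<Rightarrow> nat" and Lam :: "nat \<Rightarrow> real"
  defines "G k \<equiv> (\<Sum>i\<in>{1..k}. Lam i) *\<^sub>R (transpose L ** L)
                  + (\<Sum>i\<in>{1..k}. transpose (blkA W A (t i)) ** blkA W A (t i))"
  assumes "\<And>k. invertible (G (Suc k))"
  shows "G k *v iter_ii A b L W t Lam x0 k = (\<Sum>i\<in>{1..k}. transpose (blkA W A (t i)) *v blkb W b (t i))"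
proof (induction k)
  case (Suc k)
  let ?B = "blkA W A (t (Suc k))" and ?c = "blkb W b (t (Suc k))"
    and ?x = "iter_ii A b L W t Lam x0 k"
  let ?Q = "Lam (Suc k) *\<^sub>R (transpose L ** L) + transpose ?B ** ?B"
  have G: "G (Suc k) = G k + ?Q"
    by (simp add: G_def algebra_simps)
  have "iter_ii A b L W t Lam x0 (Suc k) = ?x - matrix_inv (G (Suc k)) *v
          (transpose ?B *v (?B *v ?x - ?c) + Lam (Suc k) *\<^sub>R ((transpose L ** L) *v ?x))"
    by (simp only: iter_ii.simps Let_def G_def)
  also have "transpose ?B *v (?B *v ?x - ?c) + Lam (Suc k) *\<^sub>R ((transpose L ** L) *v ?x)
      = ?Q *v ?x - transpose ?B *v ?c"
    by (simp add: transpose_residual_eq matrix_vector_mult_add_rdistrib scaleR_matrix_vector_assoc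
        del: transpose_matrix_vector)
  finally have "G (Suc k) *v iter_ii A b L W t Lam x0 (Suc k) = G k *v ?x + transpose ?B *v ?c"
    using recursive_update_eq[OF assms(2)[of k, unfolded G]] by (simp only: G)
  then show ?case
    using Suc.IH by simp
qed (simp add: G_def)

lemma matrix_add_rdistrib: "((A :: real^'n^'m) + B) ** C = A ** C + B ** C"
  by (vector matrix_matrix_mult_def sum.distrib[symmetric] field_simps)

lemma sum_matrix_mult_both:
  "(\<Sum>i\<in>S. (X :: real^'k^'n) ** F i ** (Y :: real^'p^'q)) = X ** (\<Sum>i\<in>S. F i) ** Y"
  by (induct S rule: infinite_finite_induct) (simp_all add: matrix_add_ldistrib matrix_add_rdistrib)

lemma sum_matrix_vector_mult: "(\<Sum>i\<in>S. F i *v (x :: real^'n)) = (\<Sum>i\<in>S. (F i :: real^'n^'m)) *v x"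
  by (induct S rule: infinite_finite_induct) (simp_all add: matrix_vector_mult_add_rdistrib)

lemma sum_blkA_gram:
  assumes "(\<Sum>i\<in>I. W i ** transpose (W i)) = mat 1"
  shows "(\<Sum>i\<in>I. transpose (blkA W A i) ** blkA W A i) = transpose A ** A"
proof -
  have "(\<Sum>i\<in>I. transpose (blkA W A i) ** blkA W A i) = (\<Sum>i\<in>I. transpose A ** (W i ** transpose (W i)) ** A)"
    by (simp add: blkA_def matrix_transpose_mul matrix_mul_assoc)
  then show ?thesis
    by (simp only: sum_matrix_mult_both assms matrix_mul_rid)
qed

lemma sum_blkA_blkb:
  assumes "(\<Sum>i\<in>I. W i ** transpose (W i)) = mat 1"
  shows "(\<Sum>i\<in>I. transpose (blkA W A i) *v blkb W b i) = transpose A *v b"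
proof -
  have "(\<Sum>i\<in>I. transpose (blkA W A i) *v blkb W b i) = (\<Sum>i\<in>I. transpose A *v ((W i ** transpose (W i)) *v b))"
    by (simp add: blkA_def blkb_def matrix_transpose_mul matrix_vector_mul_assoc matrix_mul_assoc
        del: transpose_matrix_vector)
  then show ?thesis
    by (simp only: vec.sum[symmetric] sum_matrix_vector_mult assms matrix_vector_mul_lid)
qed

lemma norm_matrix_vector_le_entry_sum:
  fixes A :: "real^'n^'m"
  shows "norm (A *v x) \<le> (\<Sum>i\<in>UNIV. \<Sum>j\<in>UNIV. \<bar>A $ i $ j\<bar>) * norm x"
proof -
  have "norm (A *v x) \<le> onorm ((*v) A) * norm x"
    by (rule onorm[OF matrix_vector_mul_bounded_linear])
  also have "\<dots> \<le> (\<Sum>i\<in>UNIV. \<Sum>j\<in>UNIV. \<bar>A $ i $ j\<bar>) * norm x"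
    by (intro mult_right_mono onorm_le_matrix_component_sum) auto
  finally show ?thesis .
qed

lemma invertible_matrix_bounded_below:
  fixes G :: "real^'n^'n"
  assumes "invertible G"
  obtains c where "c > 0" "\<And>v. c * norm v \<le> norm (G *v v)"
  using assms linear_inj_bounded_below_pos[of "(*v) G"]
  by (metis invertible_left_inverse matrix_left_invertible_injective matrix_vector_mul_linear)

lemma tendsto_solution_of_converging_systems:
  fixes G :: "nat \<Rightarrow> real^'n^'n" and h x :: "nat \<Rightarrow> real^'n"
  assumes G: "G \<longlonglongrightarrow> Glim" and inv: "invertible Glim" and h: "h \<longlonglongrightarrow> hlim"
    and sol: "eventually (\<lambda>k. G k *v x k = h k) sequentially"
  shows "x \<longlonglongrightarrow> matrix_inv Glim *v hlim"
proof -
  define xs where "xs = matrix_inv Glim *v hlim"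
  have Glim_xs: "Glim *v xs = hlim"
    by (simp add: xs_def matrix_vector_mul_assoc matrix_inv_right[OF inv])
  obtain c where c: "c > 0" "\<And>v. c * norm v \<le> norm (Glim *v v)"
    using invertible_matrix_bounded_below[OF inv] by blast
  define d where "d k = (\<Sum>i\<in>UNIV. \<Sum>j\<in>UNIV. \<bar>(Glim - G k) $ i $ j\<bar>)" for k
  have "d \<longlonglongrightarrow> (\<Sum>i\<in>UNIV. \<Sum>j\<in>UNIV. \<bar>(Glim - Glim) $ i $ j\<bar>)"
    unfolding d_def by (intro tendsto_intros G)
  then have d: "d \<longlonglongrightarrow> 0" by simp
  \<comment> \<open>Once the perturbation d k is below c/2, the lower bound of Glim absorbs it.\<close>
  have "eventually (\<lambda>k. d k < c/2) sequentially"
    using order_tendstoD(2)[OF d, of "c/2"] c(1) by simp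
  then have bound: "eventually (\<lambda>k. norm (x k - xs) \<le> (2/c) * (d k * norm xs + norm (h k - hlim))) sequentially"
    using sol
  proof eventually_elim
    case (elim k)
    have "Glim *v (x k - xs) = (Glim - G k) *v (x k - xs) + (Glim - G k) *v xs + (h k - hlim)"
      using elim(2) Glim_xs by (simp add: algebra_simps)
    then have "norm (Glim *v (x k - xs))
        \<le> norm ((Glim - G k) *v (x k - xs)) + norm ((Glim - G k) *v xs) + norm (h k - hlim)"
      by (metis norm_triangle_le order_refl add_mono)
    moreover have "norm ((Glim - G k) *v v) \<le> d k * norm v" for v
      unfolding d_def by (rule norm_matrix_vector_le_entry_sum)
    ultimately have "c * norm (x k - xs) \<le> d k * norm (x k - xs) + d k * norm xs + norm (h k - hlim)"
      using c(2)[of "x k - xs"] by (meson add_mono order_refl order_trans)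
    moreover have "d k * norm (x k - xs) \<le> c/2 * norm (x k - xs)"
      using elim(1) by (intro mult_right_mono) auto
    ultimately show ?case using c(1) by (simp add: field_simps)
  qed
  have "(\<lambda>k. (2/c) * (d k * norm xs + norm (h k - hlim))) \<longlonglongrightarrow> (2/c) * (0 * norm xs + norm (hlim - hlim))"
    by (intro tendsto_intros d h)
  then have "(\<lambda>k. x k - xs) \<longlonglongrightarrow> 0"
    by (intro Lim_null_comparison[OF bound]) simp
  then show ?thesis
    by (simp add: LIM_zero_iff xs_def)
qed

section \<open>Convergence along samplings with uniform frequencies\<close>

definition uniform_frequencies :: "nat \<Rightarrow> (nat \<Rightarrow> nat) \<Rightarrow> bool" where
  "uniform_frequencies M t \<longleftrightarrow> (\<forall>j\<ge>1. t j \<in> {1..M}) \<and>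
     (\<forall>i\<in>{1..M}. (\<lambda>k. real (card {j\<in>{1..k}. t j = i}) / real k) \<longlonglongrightarrow> 1 / real M)"

lemma uniform_frequencies_scaled_sum_tendsto:
  fixes f :: "nat \<Rightarrow> 'a::real_normed_vector"
  assumes "uniform_frequencies M t"
  shows "(\<lambda>k. (real M / real k) *\<^sub>R (\<Sum>j\<in>{1..k}. f (t j))) \<longlonglongrightarrow> (\<Sum>i\<in>{1..M}. f i)"
proof -
  have range: "t j \<in> {1..M}" if "j \<ge> 1" for j
    using assms that unfolding uniform_frequencies_def by blast
  then have "M > 0" by fastforce
  define freq where "freq k i = real (card {j\<in>{1..k}. t j = i}) / real k" for k i
  have regroup: "(real M / real k) *\<^sub>R (\<Sum>j\<in>{1..k}. f (t j)) = (\<Sum>i\<in>{1..M}. (real M * freq k i) *\<^sub>R f i)" for k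
  proof -
    have "(\<Sum>j\<in>{1..k}. f (t j)) = (\<Sum>j\<in>{1..k}. \<Sum>i\<in>{1..M}. of_bool (t j = i) *\<^sub>R f i)"
    proof (intro sum.cong refl)
      fix j assume "j \<in> {1..k}"
      have "(\<Sum>i\<in>{1..M}. of_bool (t j = i) *\<^sub>R f i) = (\<Sum>i\<in>{1..M}. if t j = i then f i else 0)"
        by (intro sum.cong) auto
      then show "f (t j) = (\<Sum>i\<in>{1..M}. of_bool (t j = i) *\<^sub>R f i)"
        using range[of j] \<open>j \<in> {1..k}\<close> by simp
    qed
    also have "\<dots> = (\<Sum>i\<in>{1..M}. \<Sum>j\<in>{1..k}. of_bool (t j = i) *\<^sub>R f i)"
      by (rule sum.swap)
    also have "\<dots> = (\<Sum>i\<in>{1..M}. (\<Sum>j\<in>{1..k}. of_bool (t j = i)) *\<^sub>R f i)"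
      by (simp only: scaleR_sum_left)
    finally show ?thesis
      by (simp add: freq_def scaleR_sum_right Int_def)
  qed
  have "(\<lambda>k. \<Sum>i\<in>{1..M}. (real M * freq k i) *\<^sub>R f i) \<longlonglongrightarrow> (\<Sum>i\<in>{1..M}. (real M * (1 / real M)) *\<^sub>R f i)"
    using assms unfolding uniform_frequencies_def freq_def
    by (intro tendsto_sum tendsto_scaleR tendsto_mult_left tendsto_const) auto
  then show ?thesis
    using \<open>M > 0\<close> by (simp only: regroup) simp
qed

lemma scaled_block_sums_tendsto:
  fixes A :: "real^'n^'m" and W :: "nat \<Rightarrow> real^'l^'m"
  assumes W_sum: "(\<Sum>i\<in>{1..M}. W i ** transpose (W i)) = mat 1"
    and freq: "uniform_frequencies M t"
  shows "(\<lambda>k. (real M / real k) *\<^sub>R (\<Sum>i\<in>{1..k}. transpose (blkA W A (t i)) ** blkA W A (t i)))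
           \<longlonglongrightarrow> transpose A ** A"
    and "(\<lambda>k. (real M / real k) *\<^sub>R (\<Sum>i\<in>{1..k}. transpose (blkA W A (t i)) *v blkb W b (t i)))
           \<longlonglongrightarrow> transpose A *v b"
  using uniform_frequencies_scaled_sum_tendsto[OF freq, of "\<lambda>i. transpose (blkA W A i) ** blkA W A i"]
    uniform_frequencies_scaled_sum_tendsto[OF freq, of "\<lambda>i. transpose (blkA W A i) *v blkb W b i"]
  by (simp_all only: sum_blkA_gram[OF W_sum] sum_blkA_blkb[OF W_sum])

lemma iter_i_tendsto:
  fixes A :: "real^'n^'m" and L :: "real^'n^'s" and W :: "nat \<Rightarrow> real^'l^'m"
  assumes A_rank: "rank A = CARD('n)" and L_rank: "rank L = CARD('n)" and "lam > 0"
    and W_sum: "(\<Sum>i\<in>{1..M}. W i ** transpose (W i)) = mat 1"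
    and freq: "uniform_frequencies M t"
  shows "iter_i A b L W t lam y0 \<longlonglongrightarrow> tikhonov A b L 0"
proof -
  let ?LL = "transpose L ** L"
  let ?G = "\<lambda>k. lam *\<^sub>R ?LL + (\<Sum>i\<in>{1..k}. transpose (blkA W A (t i)) ** blkA W A (t i))"
  let ?h = "\<lambda>k. (lam *\<^sub>R ?LL) *v y0 + (\<Sum>i\<in>{1..k}. transpose (blkA W A (t i)) *v blkb W b (t i))"
  have sol: "?G k *v iter_i A b L W t lam y0 k = ?h k" for k
    by (intro iter_i_normal_equations invertible_regularized_gram_sum \<open>lam > 0\<close> L_rank)
  have vanish: "(\<lambda>k. (real M / real k) *\<^sub>R c) \<longlonglongrightarrow> 0" for c :: "'a::real_normed_vector"
    using tendsto_scaleR[OF lim_const_over_n tendsto_const, of "real M" c] by simp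
  have "(\<lambda>k. (real M / real k) *\<^sub>R ?G k) \<longlonglongrightarrow> 0 + transpose A ** A"
    unfolding scaleR_add_right
    by (intro tendsto_add vanish scaled_block_sums_tendsto[OF W_sum freq])
  then have G: "(\<lambda>k. (real M / real k) *\<^sub>R ?G k) \<longlonglongrightarrow> transpose A ** A + 0 *\<^sub>R ?LL"
    by simp
  have h: "(\<lambda>k. (real M / real k) *\<^sub>R ?h k) \<longlonglongrightarrow> transpose A *v b"
    unfolding scaleR_add_right
    using tendsto_add[OF vanish scaled_block_sums_tendsto(2)[OF W_sum freq]] by simp
  have "invertible (transpose A ** A + 0 *\<^sub>R ?LL)"
    using A_rank by (intro invertible_tikhonov_matrix) auto
  then show ?thesis
    unfolding tikhonov_def
    by (rule tendsto_solution_of_converging_systems[OF G _ h])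
       (intro always_eventually allI, simp only: scaleR_matrix_vector_assoc[symmetric] sol)
qed

lemma iter_ii_tendsto:
  fixes A :: "real^'n^'m" and L :: "real^'n^'s" and W :: "nat \<Rightarrow> real^'l^'m"
  assumes L_rank: "rank L = CARD('n)"
    and W_sum: "(\<Sum>i\<in>{1..M}. W i ** transpose (W i)) = mat 1"
    and freq: "uniform_frequencies M t"
    and Lam_pos: "\<forall>k\<ge>1. (\<Sum>i\<in>{1..k}. Lam i) > 0"
    and Lam_lim: "(\<lambda>k. real M / real k * (\<Sum>i\<in>{1..k}. Lam i)) \<longlonglongrightarrow> lam" and "lam > 0"
  shows "iter_ii A b L W t Lam x0 \<longlonglongrightarrow> tikhonov A b L lam"
proof -
  let ?LL = "transpose L ** L"
  let ?G = "\<lambda>k. (\<Sum>i\<in>{1..k}. Lam i) *\<^sub>R ?LL + (\<Sum>i\<in>{1..k}. transpose (blkA W A (t i)) ** blkA W A (t i))"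
  let ?h = "\<lambda>k. \<Sum>i\<in>{1..k}. transpose (blkA W A (t i)) *v blkb W b (t i)"
  have sol: "?G k *v iter_ii A b L W t Lam x0 k = ?h k" for k
    using Lam_pos by (intro iter_ii_normal_equations invertible_regularized_gram_sum L_rank)
      (simp del: sum.cl_ivl_Suc)
  have "(\<lambda>k. (real M / real k) *\<^sub>R ?G k) \<longlonglongrightarrow> lam *\<^sub>R ?LL + transpose A ** A"
    unfolding scaleR_add_right scaleR_scaleR
    by (intro tendsto_add tendsto_scaleR Lam_lim tendsto_const scaled_block_sums_tendsto[OF W_sum freq])
  then have G: "(\<lambda>k. (real M / real k) *\<^sub>R ?G k) \<longlonglongrightarrow> transpose A ** A + lam *\<^sub>R ?LL"
    by (simp only: add.commute)
  have "invertible (transpose A ** A + lam *\<^sub>R ?LL)"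
    using \<open>lam > 0\<close> L_rank by (intro invertible_tikhonov_matrix) auto
  then show ?thesis
    unfolding tikhonov_def
    by (rule tendsto_solution_of_converging_systems[OF G _ scaled_block_sums_tendsto(2)[OF W_sum freq]])
       (intro always_eventually allI, simp only: scaleR_matrix_vector_assoc[symmetric] sol)
qed

section \<open>Almost sure uniform frequencies of the sampling\<close>

lemma (in prob_space) AE_tendsto_if_summable_deviation_probs:
  fixes Z :: "nat \<Rightarrow> 'a \<Rightarrow> real"
  assumes meas: "\<And>k. Z k \<in> borel_measurable M"
    and summable: "\<And>e. e > 0 \<Longrightarrow> summable (\<lambda>k. prob {x \<in> space M. e \<le> \<bar>Z k x - c\<bar>})"
  shows "AE x in M. (\<lambda>k. Z k x) \<longlonglongrightarrow> c"
proof -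
  have "AE x in M. eventually (\<lambda>k. \<bar>Z k x - c\<bar> < e) sequentially" if "e > 0" for e
  proof -
    have "AE x in M. eventually (\<lambda>k. x \<in> space M - {x \<in> space M. e \<le> \<bar>Z k x - c\<bar>}) sequentially"
      using summable[OF that] meas by (intro borel_cantelli_AE1) (auto simp: emeasure_eq_measure)
    then show ?thesis
      by eventually_elim (auto elim!: eventually_mono)
  qed
  then have "AE x in M. \<forall>n::nat. eventually (\<lambda>k. \<bar>Z k x - c\<bar> < 1 / Suc n) sequentially"
    by (subst AE_all_countable) simp
  then show ?thesis
  proof eventually_elim
    case (elim x)
    show ?case
    proof (rule tendstoI)
      fix r :: real
      assume "r > 0"
      then obtain n :: nat where "1 / Suc n < r"
        using nat_approx_posE by blast
      with elim[rule_format, of n] show "eventually (\<lambda>k. dist (Z k x) c < r) sequentially"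
        by (auto simp: dist_real_def elim!: eventually_mono)
    qed
  qed
qed

lemma (in prob_space) AE_tendsto_average_iid_bounded:
  fixes X :: "nat \<Rightarrow> 'a \<Rightarrow> real"
  assumes indep: "indep_vars (\<lambda>_. borel) X {1..}"
    and distr: "\<And>j. j \<ge> 1 \<Longrightarrow> distr M borel (X j) = distr M borel (X 1)"
    and bounded: "AE x in M. X 1 x \<in> {a..b}" and "a < b"
  shows "AE x in M. (\<lambda>k. (\<Sum>j\<in>{1..k}. X j x) / real k) \<longlonglongrightarrow> expectation (X 1)"
proof (rule AE_tendsto_if_summable_deviation_probs)
  have meas: "X j \<in> borel_measurable M" if "j \<ge> 1" for j
    using indep that unfolding indep_vars_def by auto
  then show "(\<lambda>x. (\<Sum>j\<in>{1..k}. X j x) / real k) \<in> borel_measurable M" for k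
    by (intro borel_measurable_divide borel_measurable_sum borel_measurable_const) auto
  fix e :: real
  assume "e > 0"
  define q where "q = exp (-2 * e\<^sup>2 / (b - a)\<^sup>2)"
  have hoeffding: "prob {x \<in> space M. e \<le> \<bar>(\<Sum>j\<in>{1..k}. X j x) / real k - expectation (X 1)\<bar>} \<le> 2 * q ^ k"
    if "k \<ge> 1" for k
  proof -
    interpret iid_interval_bounded_random_variables M "{1..k}" X "X 1" a b
    proof
      show "indep_vars (\<lambda>_. borel) X {1..k}"
        by (rule indep_vars_subset[OF indep]) auto
      show "distr M borel (X j) = distr M borel (X 1)" if "j \<in> {1..k}" for j
        using that by (intro distr) simp
    qed (use meas bounded in auto)
    interpret Hoeffding_ineq_iid M "{1..k}" X "X 1" a b "expectation (X 1)"
      by unfold_locales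
    have "prob {x \<in> space M. e \<le> \<bar>(\<Sum>j\<in>{1..k}. X j x) / real k - expectation (X 1)\<bar>}
        \<le> 2 * exp (-2 * real k * e\<^sup>2 / (b - a)\<^sup>2)"
      using Hoeffding_ineq_abs_ge'[OF less_imp_le[OF \<open>e > 0\<close>] \<open>a < b\<close>] that
      by (simp only: card_atLeastAtMost diff_Suc_1 atLeastatMost_empty_iff not_le simp_thms)
    also have "\<dots> = 2 * q ^ k"
      by (simp add: q_def exp_of_nat_mult[symmetric] mult_ac)
    finally show ?thesis .
  qed
  have "q < 1"
    using \<open>e > 0\<close> \<open>a < b\<close> by (simp add: q_def)
  then have "summable (\<lambda>k. 2 * q ^ k)"
    by (intro summable_mult summable_geometric) (simp add: q_def)
  then show "summable (\<lambda>k. prob {x \<in> space M. e \<le> \<bar>(\<Sum>j\<in>{1..k}. X j x) / real k - expectation (X 1)\<bar>})"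
  proof (rule summable_comparison_test'[where N = 1])
    fix k :: nat
    assume "k \<ge> 1"
    then show "norm (prob {x \<in> space M. e \<le> \<bar>(\<Sum>j\<in>{1..k}. X j x) / real k - expectation (X 1)\<bar>})
        \<le> 2 * q ^ k"
      using hoeffding by simp
  qed
qed

lemma (in prob_space) AE_empirical_frequency_tendsto:
  fixes \<tau> :: "nat \<Rightarrow> 'a \<Rightarrow> nat"
  assumes indep: "indep_vars (\<lambda>_. count_space UNIV) \<tau> {1..}"
    and unif: "\<And>k. k \<ge> 1 \<Longrightarrow> distr M (count_space UNIV) (\<tau> k) = measure_pmf (pmf_of_set {1..N})"
    and "i \<in> {1..N}"
  shows "AE \<omega> in M. (\<lambda>k. real (card {j\<in>{1..k}. \<tau> j \<omega> = i}) / real k) \<longlonglongrightarrow> 1 / real N"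
proof -
  have meas: "\<tau> j \<in> measurable M (count_space UNIV)" if "j \<ge> 1" for j
    using indep that unfolding indep_vars_def by auto
  define g where "g x = (of_bool (x = i) :: real)" for x :: nat
  define X where "X j = g \<circ> \<tau> j" for j
  have g_meas: "g \<in> borel_measurable (count_space UNIV)" by simp
  have distr_X: "distr M borel (X j) = distr (measure_pmf (pmf_of_set {1..N})) borel g" if "j \<ge> 1" for j
    using distr_distr[OF g_meas meas[OF that]] unif[OF that] by (simp add: X_def)
  have "indep_vars (\<lambda>_. borel) (\<lambda>j \<omega>. g (\<tau> j \<omega>)) {1..}"
    using indep by (rule indep_vars_compose2) simp
  then have "AE \<omega> in M. (\<lambda>k. (\<Sum>j\<in>{1..k}. X j \<omega>) / real k) \<longlonglongrightarrow> expectation (X 1)"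
    using distr_X by (intro AE_tendsto_average_iid_bounded[where a = 0 and b = 1])
      (auto simp: X_def g_def comp_def)
  moreover have "expectation (X 1) = 1 / real N"
  proof -
    have "expectation (X 1) = integral\<^sup>L (distr M (count_space UNIV) (\<tau> 1)) g"
      by (simp add: X_def integral_distr[OF meas g_meas] comp_def)
    also have "\<dots> = 1 / real N"
      using unif[of 1] \<open>i \<in> {1..N}\<close> by (simp add: integral_pmf_of_set g_def)
    finally show ?thesis .
  qed
  ultimately show ?thesis
    by (simp add: X_def g_def Int_def)
qed

lemma (in prob_space) AE_uniform_frequencies:
  fixes \<tau> :: "nat \<Rightarrow> 'a \<Rightarrow> nat"
  assumes indep: "indep_vars (\<lambda>_. count_space UNIV) \<tau> {1..}"
    and unif: "\<And>k. k \<ge> 1 \<Longrightarrow> distr M (count_space UNIV) (\<tau> k) = measure_pmf (pmf_of_set {1..N})"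
    and "N \<ge> 1"
  shows "AE \<omega> in M. uniform_frequencies N (\<lambda>j. \<tau> j \<omega>)"
proof -
  have "AE \<omega> in M. \<tau> j \<omega> \<in> {1..N}" if "j \<ge> 1" for j
  proof -
    have "AE x in distr M (count_space UNIV) (\<tau> j). x \<in> {1..N}"
      using \<open>N \<ge> 1\<close> by (subst unif[OF that]) (auto simp: AE_measure_pmf_iff)
    moreover have "\<tau> j \<in> measurable M (count_space UNIV)"
      using indep that unfolding indep_vars_def by auto
    ultimately show ?thesis
      by (simp add: AE_distr_iff)
  qed
  then have "AE \<omega> in M. \<forall>j\<ge>1. \<tau> j \<omega> \<in> {1..N}"
    by (subst AE_all_countable) auto
  moreover have "AE \<omega> in M. \<forall>i\<in>{1..N}. (\<lambda>k. real (card {j\<in>{1..k}. \<tau> j \<omega> = i}) / real k) \<longlonglongrightarrow> 1 / real N"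
    using AE_empirical_frequency_tendsto[OF indep unif] by (intro AE_finite_allI) auto
  ultimately show ?thesis
    unfolding uniform_frequencies_def by simp
qed

theorem theorem2p2:
  fixes A :: "real^'n^'m" and b :: "real^'m" and L :: "real^'n^'s"
    and W :: "nat \<Rightarrow> real^'l^'m" and M :: nat
    and P :: "'w measure" and \<tau> :: "nat \<Rightarrow> 'w \<Rightarrow> nat"
  assumes L_rank: "rank L = CARD('n)"
    and W_sum: "(\<Sum>i\<in>{1..M}. W i ** transpose (W i)) = mat 1"
    and P: "prob_space P"
    and indep: "prob_space.indep_vars P (\<lambda>_. count_space UNIV) \<tau> {1..}"
    and unif: "\<And>k. k \<ge> 1 \<Longrightarrow>
                 distr P (count_space UNIV) (\<tau> k) = measure_pmf (pmf_of_set {1..M})"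
  shows
   "(\<forall>lam y0. lam > 0 \<longrightarrow> rank A = CARD('n) \<longrightarrow>
        (AE \<omega> in P. (\<lambda>k. iter_i A b L W (\<lambda>i. \<tau> i \<omega>) lam y0 k)
                       \<longlonglongrightarrow> matrix_inv (transpose A ** A) *v (transpose A *v b)))
    \<and> (\<forall>Lam lam x0. (\<forall>k\<ge>1. (\<Sum>i\<in>{1..k}. Lam i) > 0) \<longrightarrow>
        (\<lambda>k. real M / real k * (\<Sum>i\<in>{1..k}. Lam i)) \<longlonglongrightarrow> lam \<longrightarrow> lam > 0 \<longrightarrow>
        (AE \<omega> in P. (\<lambda>k. iter_ii A b L W (\<lambda>i. \<tau> i \<omega>) Lam x0 k)
                       \<longlonglongrightarrow> tikhonov A b L lam))"
proof -
  interpret prob_space P by (rule P)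
  have "M \<ge> 1"
  proof (rule ccontr)
    assume "\<not> M \<ge> 1"
    with W_sum have "(mat 1 :: real^'m^'m) $ i $ i = 0" for i
      by simp
    then show False
      by (simp add: mat_def)
  qed
  then have freq: "AE \<omega> in P. uniform_frequencies M (\<lambda>j. \<tau> j \<omega>)"
    using unif by (intro prob_space.AE_uniform_frequencies[OF P indep])
  show ?thesis
  proof (intro conjI allI impI)
    fix lam :: real and y0 :: "real^'n"
    assume "lam > 0" "rank A = CARD('n)"
    show "AE \<omega> in P. (\<lambda>k. iter_i A b L W (\<lambda>i. \<tau> i \<omega>) lam y0 k)
        \<longlonglongrightarrow> matrix_inv (transpose A ** A) *v (transpose A *v b)"
      using freq by eventually_elim
        (use iter_i_tendsto[OF \<open>rank A = CARD('n)\<close> L_rank \<open>lam > 0\<close> W_sum] in \<open>simp add: tikhonov_def\<close>)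
  next
    fix Lam :: "nat \<Rightarrow> real" and lam :: real and x0 :: "real^'n"
    assume "\<forall>k\<ge>1. (\<Sum>i\<in>{1..k}. Lam i) > 0"
      and "(\<lambda>k. real M / real k * (\<Sum>i\<in>{1..k}. Lam i)) \<longlonglongrightarrow> lam" and "lam > 0"
    note Lam = this
    show "AE \<omega> in P. (\<lambda>k. iter_ii A b L W (\<lambda>i. \<tau> i \<omega>) Lam x0 k) \<longlonglongrightarrow> tikhonov A b L lam"
      using freq by eventually_elim (rule iter_ii_tendsto[OF L_rank W_sum _ Lam])
  qed
qed

end
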